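(* Let $\kappa$ be a regular uncountable cardinal, $L=\{\lambda+1:\lambda<\kappa\text{ a limit ordinal}\}$, $W=\{\lambda<\kappa:\operatorname{cf}\lambda=\omega\}$, and let $I$ be the ideal generated by $I_\kappa\cup\{W\}$. Suppose $A\subseteq L\setminus\{\lambda+1:\lambda\in W\}$ and $B(A)=\{\lambda:\lambda+1\in A\}$ is stationary. Then $A\notin P(I)$.
   Context: An ideal on $\kappa$ is a family of subsets of $\kappa$ closed under subsets and finite unions, which is $<\kappa$-complete and contains all singletons; $I_\kappa=\{X\subseteq\kappa:|X|<\kappa\}$. For $A\subseteq\kappa$ and $X_\alpha\subseteq\kappa$, $\bigtriangledown_{\alpha\in A}X_\alpha=\{\xi<\kappa:\exists\alpha<\xi\,(\alpha\in A\wedge \xi\in X_\alpha)\}$. An ideal is pleasant if whenever $A$ and all $X_\alpha$ belong to it, so does $\bigtriangledown_{\alpha\in A}X_\alpha$. The pleasant closure $P(I)$ is built in stages: $P_0(I)=I$; $P_{\beta+1}(I)$ is the ideal generated by $P_\beta(I)$ together with all $\bigtriangledown_{\alpha\in T}X_\alpha$ with $T\in I$ and each $X_\alpha\in P_\beta(I)$; unions at limit stages; $P(I)=\bigcup_\beta P_\beta(I)$ (the smallest pleasant ideal containing $I$). *)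

theory Defs
  imports Main "HOL-Library.Equipollence" "HOL-Library.Countable_Set"
begin

text \<open>The cardinal kappa is modelled as a well-ordered type 'a: the ordinals below
kappa are the elements of 'a, and subsets of kappa are sets of type 'a set.\<close>

definition is_cardinal_type :: "'a::wellorder itself \<Rightarrow> bool" where
  "is_cardinal_type _ \<longleftrightarrow> (\<forall>a::'a. {..<a} \<prec> (UNIV::'a set))"

definition unbounded :: "'a::wellorder set \<Rightarrow> bool" where
  "unbounded X \<longleftrightarrow> (\<forall>a. \<exists>x\<in>X. a \<le> x)"

definition is_regular_type :: "'a::wellorder itself \<Rightarrow> bool" where
  "is_regular_type _ \<longleftrightarrow> (\<forall>X::'a set. unbounded X \<longrightarrow> X \<approx> (UNIV::'a set))"

definition succ_ord :: "'a::wellorder \<Rightarrow> 'a" where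
  "succ_ord l = (LEAST x. l < x)"

definition limit_ord :: "'a::wellorder \<Rightarrow> bool" where
  "limit_ord l \<longleftrightarrow> (\<exists>x. x < l) \<and> (\<forall>b<l. \<exists>c. b < c \<and> c < l)"

definition cf_omega :: "'a::wellorder \<Rightarrow> bool" where
  "cf_omega l \<longleftrightarrow> (\<exists>f::nat \<Rightarrow> 'a. strict_mono f \<and> (\<forall>n. f n < l) \<and> (\<forall>b<l. \<exists>n. b < f n))"

definition club :: "'a::wellorder set \<Rightarrow> bool" where
  "club C \<longleftrightarrow> unbounded C \<and>
     (\<forall>l. limit_ord l \<and> (\<forall>b<l. \<exists>c\<in>C. b \<le> c \<and> c < l) \<longrightarrow> l \<in> C)"

definition stationary :: "'a::wellorder set \<Rightarrow> bool" where
  "stationary S \<longleftrightarrow> (\<forall>C. club C \<longrightarrow> S \<inter> C \<noteq> {})"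

definition ideal_on :: "'a::wellorder set set \<Rightarrow> bool" where
  "ideal_on I \<longleftrightarrow> (\<forall>X\<in>I. \<forall>Y. Y \<subseteq> X \<longrightarrow> Y \<in> I) \<and> (\<forall>X\<in>I. \<forall>Y\<in>I. X \<union> Y \<in> I)
     \<and> (\<forall>F. F \<subseteq> I \<and> F \<prec> (UNIV::'a set) \<longrightarrow> \<Union>F \<in> I) \<and> (\<forall>x. {x} \<in> I)"

definition small_ideal :: "'a::wellorder set set" where
  "small_ideal = {X. X \<prec> (UNIV::'a set)}"

definition generated_ideal :: "'a::wellorder set set \<Rightarrow> 'a set set" where
  "generated_ideal G = \<Inter>{I. ideal_on I \<and> G \<subseteq> I}"

definition diag_union :: "'a::wellorder set \<Rightarrow> ('a \<Rightarrow> 'a set) \<Rightarrow> 'a set" where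
  "diag_union A X = {\<xi>. \<exists>\<alpha><\<xi>. \<alpha> \<in> A \<and> \<xi> \<in> X \<alpha>}"

definition pleasant :: "'a::wellorder set set \<Rightarrow> bool" where
  "pleasant I \<longleftrightarrow> (\<forall>A X. A \<in> I \<and> (\<forall>\<alpha>. X \<alpha> \<in> I) \<longrightarrow> diag_union A X \<in> I)"

text \<open>P(I) = union of the stages P_beta(I): the least family containing I that is closed
under the ideal operations and under diagonal unions indexed by T in I of members.\<close>
inductive_set pleasant_closure :: "'a::wellorder set set \<Rightarrow> 'a set set" for I where
  base: "X \<in> I \<Longrightarrow> X \<in> pleasant_closure I"
| diag: "T \<in> I \<Longrightarrow> (\<And>\<alpha>. \<alpha> \<in> T \<Longrightarrow> X \<alpha> \<in> pleasant_closure I) \<Longrightarrow> diag_union T X \<in> pleasant_closure I"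
| sub: "Y \<in> pleasant_closure I \<Longrightarrow> X \<subseteq> Y \<Longrightarrow> X \<in> pleasant_closure I"
| union: "F \<prec> (UNIV::'a set) \<Longrightarrow> (\<And>Y. Y \<in> F \<Longrightarrow> Y \<in> pleasant_closure I) \<Longrightarrow> \<Union>F \<in> pleasant_closure I"
| single: "{x} \<in> pleasant_closure I"

end

theory Submission
  imports Defs
begin

text \<open>For X \<subseteq> \<kappa> consider the set of l \<notin> W with l + 1 \<in> X. By induction over the pleasant
closure, this set is nonstationary for every X \<in> P(I). Members of I are bounded modulo W, and
W contains no successors. For a diagonal union indexed by T \<in> I, a large l \<notin> W with l + 1 in
it lies in the diagonal union of the sets attached to the X \<alpha>, since its index \<alpha> \<le> l cannot be
l itself (that would put l into T). Finally the nonstationary ideal is closed under diagonal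
unions (a diagonal intersection of clubs is a club) and under unions of fewer than \<kappa> sets.
For the given A the set is B(A), which is stationary.\<close>

lemma less_succ_ord: "(a::'a::wellorder) < b \<Longrightarrow> a < succ_ord a"
  unfolding succ_ord_def by (rule LeastI)

lemma succ_ord_le: "(a::'a::wellorder) < b \<Longrightarrow> succ_ord a \<le> b"
  unfolding succ_ord_def by (rule Least_le)

lemma not_limit_succ_ord:
  assumes "(a::'a::wellorder) < b" shows "\<not> limit_ord (succ_ord a)"
  using less_succ_ord[OF assms] succ_ord_le unfolding limit_ord_def by (meson leD)

lemma club_UNIV: "club (UNIV::'a::wellorder set)"
  unfolding club_def unbounded_def by auto

lemma club_closed:
  "club C \<Longrightarrow> limit_ord l \<Longrightarrow> (\<And>b. b < l \<Longrightarrow> \<exists>c\<in>C. b \<le> c \<and> c < l) \<Longrightarrow> l \<in> C"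
  unfolding club_def by blast

lemma club_Int_atLeast:
  assumes "club C" shows "club (C \<inter> {b::'a::wellorder..})"
  unfolding club_def
proof (intro conjI allI impI)
  show "unbounded (C \<inter> {b..})"
    unfolding unbounded_def
  proof
    fix a
    obtain x where "x \<in> C" "max a b \<le> x" using assms unfolding club_def unbounded_def by blast
    thus "\<exists>x\<in>C \<inter> {b..}. a \<le> x" by auto
  qed
next
  fix l assume l: "limit_ord l \<and> (\<forall>d<l. \<exists>c\<in>C \<inter> {b..}. d \<le> c \<and> c < l)"
  then obtain c where "c \<in> C \<inter> {b..}" "c < l" unfolding limit_ord_def by blast
  with l assms show "l \<in> C \<inter> {b..}" unfolding club_def by fastforce
qed

lemma not_stationary_iff: "\<not> stationary X \<longleftrightarrow> (\<exists>C. club C \<and> X \<inter> C = {})"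
  unfolding stationary_def by blast

lemma nonstationary_subset: "\<not> stationary Y \<Longrightarrow> X \<subseteq> Y \<Longrightarrow> \<not> stationary X"
  unfolding stationary_def by blast

lemma nonstationary_Un_bounded:
  assumes "\<not> stationary X" shows "\<not> stationary (X \<union> {..<b::'a::wellorder})"
proof -
  obtain C where "club C" "X \<inter> C = {}" using assms not_stationary_iff by blast
  hence "club (C \<inter> {b..})" "(X \<union> {..<b}) \<inter> (C \<inter> {b..}) = {}"
    using club_Int_atLeast by auto
  thus ?thesis using not_stationary_iff by blast
qed

lemma nonstationary_bounded: "X \<subseteq> {..<b::'a::wellorder} \<Longrightarrow> \<not> stationary X"
  using nonstationary_Un_bounded[of "{}" b] club_UNIV
  unfolding stationary_def by blast

definition diag_inter :: "('a::wellorder \<Rightarrow> 'a set) \<Rightarrow> 'a set" where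
  "diag_inter C = {\<xi>. \<forall>\<alpha><\<xi>. \<xi> \<in> C \<alpha>}"

lemma closed_diag_inter:
  assumes clubs: "\<And>\<alpha>. club (C \<alpha>)" and lim: "limit_ord l"
    and cof: "\<And>b. b < l \<Longrightarrow> \<exists>c\<in>diag_inter C. b \<le> c \<and> c < l"
  shows "l \<in> diag_inter C"
  unfolding diag_inter_def
proof (intro CollectI allI impI)
  fix \<alpha> assume "\<alpha> < l"
  then obtain e where e: "\<alpha> < e" "e < l" using lim unfolding limit_ord_def by blast
  show "l \<in> C \<alpha>"
  proof (rule club_closed[OF clubs lim])
    fix b assume "b < l"
    hence "max b e < l" using e by simp
    then obtain c where "c \<in> diag_inter C" "max b e \<le> c" "c < l" using cof by blast
    with e show "\<exists>c\<in>C \<alpha>. b \<le> c \<and> c < l" unfolding diag_inter_def by force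
  qed
qed

lemma diag_union_Int_diag_inter:
  "(\<And>\<alpha>. \<alpha> \<in> T \<Longrightarrow> N \<alpha> \<inter> C \<alpha> = {}) \<Longrightarrow> diag_union T N \<inter> diag_inter C = {}"
  unfolding diag_union_def diag_inter_def by blast

definition bounded_modulo :: "'a::wellorder set \<Rightarrow> 'a set set" where
  "bounded_modulo W = {X. \<exists>b. X \<subseteq> W \<union> {..<b}}"

lemma bounded_moduloI: "X \<subseteq> W \<union> {..<b} \<Longrightarrow> X \<in> bounded_modulo W"
  unfolding bounded_modulo_def by (rule CollectI exI)+

lemma bounded_moduloE:
  assumes "X \<in> bounded_modulo W" obtains b where "X \<subseteq> W \<union> {..<b}"
  using assms unfolding bounded_modulo_def by blast

locale regular_uncountable =
  fixes \<kappa> :: "'a::wellorder itself"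
  assumes cardinal: "is_cardinal_type \<kappa>"
    and regular: "is_regular_type \<kappa>"
    and uncountable: "\<not> countable (UNIV::'a set)"
begin

lemma small_imp_bounded:
  assumes "(X::'a set) \<prec> (UNIV::'a set)" shows "\<exists>b. X \<subseteq> {..<b}"
proof -
  have "\<not> unbounded X" using regular assms unfolding is_regular_type_def lesspoll_def by blast
  thus ?thesis unfolding unbounded_def by (auto simp: not_le)
qed

lemma countable_imp_bounded:
  assumes "countable (X::'a set)" shows "\<exists>b. X \<subseteq> {..<b}"
proof -
  have "\<not> unbounded X"
  proof
    assume "unbounded X"
    hence "X \<approx> (UNIV::'a set)" using regular unfolding is_regular_type_def by blast
    thus False using uncountable countable_eqpoll[OF assms] eqpoll_sym by blast
  qed
  thus ?thesis unfolding unbounded_def by (auto simp: not_le)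
qed

lemma ex_greater: "\<exists>b. (a::'a) < b"
  using countable_imp_bounded[of "{a}"] by auto

lemma less_succ: "(a::'a) < succ_ord a"
  using ex_greater less_succ_ord by blast

lemma not_limit_succ: "\<not> limit_ord (succ_ord (a::'a))"
  using ex_greater not_limit_succ_ord by blast

lemma image_initial_segment_bounded: "\<exists>b. f ` {..<a::'a} \<subseteq> {..<b::'a}"
proof -
  have "{..<a} \<prec> (UNIV::'a set)" using cardinal unfolding is_cardinal_type_def by blast
  thus ?thesis using small_imp_bounded lesspoll_trans1[OF image_lepoll] by blast
qed

lemma strict_mono_seq_limit:
  assumes mono: "strict_mono (s::nat \<Rightarrow> 'a)"
  obtains l where "limit_ord l" "\<And>n. s n < l" "\<And>b. b < l \<Longrightarrow> \<exists>n. b < s n"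
proof -
  obtain B where B: "range s \<subseteq> {..<B}" using countable_imp_bounded[of "range s"] by auto
  define l where "l = (LEAST y. \<forall>n. s n \<le> y)"
  have "\<forall>n. s n \<le> B" using B by (auto intro: less_imp_le)
  hence upper: "\<forall>n. s n \<le> l" unfolding l_def by (rule LeastI)
  have below: "s n < l" for n
  proof -
    have "s n < s (Suc n)" using mono by (simp add: strict_mono_Suc_iff)
    thus ?thesis using upper by (blast intro: order.strict_trans2)
  qed
  have cofinal: "\<exists>n. b < s n" if "b < l" for b
  proof (rule ccontr)
    assume "\<nexists>n. b < s n"
    hence "\<forall>n. s n \<le> b" by (simp add: not_less)
    hence "l \<le> b" unfolding l_def by (rule Least_le)
    thus False using that by simp
  qed
  have "limit_ord l" unfolding limit_ord_def using below cofinal by blast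
  thus ?thesis using below cofinal by (rule that)
qed

lemma diag_inter_step:
  fixes C :: "'a \<Rightarrow> 'a set"
  assumes clubs: "\<And>\<alpha>. club (C \<alpha>)"
  shows "\<exists>y. x < y \<and> (\<forall>\<alpha><x. \<exists>c\<in>C \<alpha>. x < c \<and> c < y)"
proof -
  have "\<forall>\<alpha>. \<exists>c\<in>C \<alpha>. succ_ord x \<le> c" using clubs unfolding club_def unbounded_def by blast
  then obtain g where g: "\<And>\<alpha>. g \<alpha> \<in> C \<alpha>" "\<And>\<alpha>. succ_ord x \<le> g \<alpha>" by metis
  obtain b where b: "g ` {..<x} \<subseteq> {..<b}" using image_initial_segment_bounded by blast
  let ?y = "max b (succ_ord x)"
  have "x < ?y" using less_succ by (simp add: less_max_iff_disj)
  moreover have "g \<alpha> \<in> C \<alpha> \<and> x < g \<alpha> \<and> g \<alpha> < ?y" if "\<alpha> < x" for \<alpha>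
  proof -
    have "x < g \<alpha>" using less_succ[of x] g(2)[of \<alpha>] by (rule order.strict_trans2)
    moreover have "g \<alpha> < b" using b that by blast
    ultimately show ?thesis using g(1) by (simp add: less_max_iff_disj)
  qed
  ultimately show ?thesis by blast
qed

lemma unbounded_diag_inter:
  fixes C :: "'a \<Rightarrow> 'a set"
  assumes clubs: "\<And>\<alpha>. club (C \<alpha>)"
  shows "unbounded (diag_inter C)"
  unfolding unbounded_def
proof
  fix a
  obtain nxt where nxt: "\<And>x. x < nxt x" "\<And>x \<alpha>. \<alpha> < x \<Longrightarrow> \<exists>c\<in>C \<alpha>. x < c \<and> c < nxt x"
  proof -
    have "\<forall>x. \<exists>y. x < y \<and> (\<forall>\<alpha><x. \<exists>c\<in>C \<alpha>. x < c \<and> c < y)"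
      using diag_inter_step clubs by blast
    thus ?thesis using that by metis
  qed
  txt \<open>Every gap (s k, s (k+1)) meets each C \<alpha> with \<alpha> < s k, so the supremum of s lies
    in every C \<alpha> below it.\<close>
  define s where "s n = (nxt ^^ n) a" for n
  have s_Suc: "s (Suc n) = nxt (s n)" for n by (simp add: s_def)
  have mono: "strict_mono s" unfolding strict_mono_Suc_iff by (simp add: s_Suc nxt)
  obtain l where lim: "limit_ord l" and below: "\<And>n. s n < l"
    and cofinal: "\<And>b. b < l \<Longrightarrow> \<exists>n. b < s n"
    using strict_mono_seq_limit[OF mono] by blast
  have "l \<in> C \<alpha>" if "\<alpha> < l" for \<alpha>
  proof (rule club_closed[OF clubs lim])
    fix b assume "b < l"
    then obtain m n where "\<alpha> < s m" "b < s n" using cofinal \<open>\<alpha> < l\<close> by blast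
    moreover have "s m \<le> s (max m n)" "s n \<le> s (max m n)"
      using mono by (simp_all add: strict_mono_less_eq)
    ultimately have "\<alpha> < s (max m n)" "b < s (max m n)" by auto
    then obtain c where "c \<in> C \<alpha>" "b < c" "c < s (Suc (max m n))"
      using nxt(2) s_Suc by fastforce
    with below show "\<exists>c\<in>C \<alpha>. b \<le> c \<and> c < l" by (meson less_imp_le order.strict_trans)
  qed
  moreover have "a \<le> l" using below[of 0] by (simp add: s_def)
  ultimately show "\<exists>x\<in>diag_inter C. a \<le> x" unfolding diag_inter_def by blast
qed

lemma club_diag_inter: "(\<And>\<alpha>. club (C \<alpha>)) \<Longrightarrow> club (diag_inter (C :: 'a \<Rightarrow> 'a set))"
  using unbounded_diag_inter closed_diag_inter unfolding club_def[of "diag_inter C"] by blast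

lemma nonstationary_diag_union:
  assumes "\<And>\<alpha>. \<alpha> \<in> T \<Longrightarrow> \<not> stationary (N \<alpha> :: 'a set)"
  shows "\<not> stationary (diag_union T N)"
proof -
  have "\<forall>\<alpha>. \<exists>C. club C \<and> (\<alpha> \<in> T \<longrightarrow> N \<alpha> \<inter> C = {})"
    using assms club_UNIV unfolding not_stationary_iff by blast
  then obtain C where C: "\<And>\<alpha>. club (C \<alpha>)" "\<And>\<alpha>. \<alpha> \<in> T \<Longrightarrow> N \<alpha> \<inter> C \<alpha> = {}"
    by metis
  have "club (diag_inter C)" using C(1) by (rule club_diag_inter)
  moreover have "diag_union T N \<inter> diag_inter C = {}" using C(2) by (rule diag_union_Int_diag_inter)
  ultimately show ?thesis unfolding not_stationary_iff by blast
qed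

lemma nonstationary_Union:
  fixes F :: "'a set set"
  assumes small: "F \<prec> (UNIV::'a set)" and ns: "\<And>Y. Y \<in> F \<Longrightarrow> \<not> stationary Y"
  shows "\<not> stationary (\<Union>F)"
proof -
  txt \<open>Index F injectively by ordinals below some b; above b, \<Union>F is a diagonal union.\<close>
  obtain f :: "'a set \<Rightarrow> 'a" where f: "inj_on f F"
    using small unfolding lesspoll_def lepoll_def by blast
  have "f ` F \<prec> (UNIV::'a set)" using lesspoll_trans1[OF image_lepoll small] .
  then obtain b where b: "f ` F \<subseteq> {..<b}" using small_imp_bounded by blast
  let ?D = "diag_union (f ` F) (the_inv_into F f)"
  have "\<Union>F \<subseteq> ?D \<union> {..<b}"
  proof
    fix x assume "x \<in> \<Union>F"
    then obtain Y where Y: "Y \<in> F" "x \<in> Y" by blast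
    show "x \<in> ?D \<union> {..<b}"
    proof (cases "x < b")
      case False
      hence "f Y < x" using b Y(1) by fastforce
      moreover have "x \<in> the_inv_into F f (f Y)" using f Y by (simp add: the_inv_into_f_f)
      ultimately show ?thesis using Y(1) unfolding diag_union_def by blast
    qed simp
  qed
  moreover have "\<not> stationary ?D"
  proof (rule nonstationary_diag_union)
    fix \<alpha> assume "\<alpha> \<in> f ` F"
    then obtain Y where "Y \<in> F" "\<alpha> = f Y" by blast
    thus "\<not> stationary (the_inv_into F f \<alpha>)" using f ns by (simp add: the_inv_into_f_f)
  qed
  ultimately show ?thesis using nonstationary_Un_bounded nonstationary_subset by blast
qed

lemma ideal_on_bounded_modulo: "ideal_on (bounded_modulo (W::'a set))"
  unfolding ideal_on_def
proof (intro conjI ballI allI impI)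
  fix X Y assume "X \<in> bounded_modulo W" "Y \<subseteq> X"
  thus "Y \<in> bounded_modulo W" by (meson bounded_moduloE bounded_moduloI order_trans)
next
  fix X Y assume "X \<in> bounded_modulo W" "Y \<in> bounded_modulo W"
  then obtain b c where "X \<subseteq> W \<union> {..<b}" "Y \<subseteq> W \<union> {..<c}" by (auto elim!: bounded_moduloE)
  hence "X \<union> Y \<subseteq> W \<union> {..<max b c}" by (auto simp: less_max_iff_disj)
  thus "X \<union> Y \<in> bounded_modulo W" by (rule bounded_moduloI)
next
  fix F assume F: "F \<subseteq> bounded_modulo W \<and> F \<prec> (UNIV::'a set)"
  hence "\<forall>Y\<in>F. \<exists>b. Y \<subseteq> W \<union> {..<b}" unfolding bounded_modulo_def by auto
  hence "\<exists>g. \<forall>Y\<in>F. Y \<subseteq> W \<union> {..<g Y}" by (rule bchoice)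
  then obtain g where g: "\<forall>Y\<in>F. Y \<subseteq> W \<union> {..<g Y}" ..
  have "g ` F \<prec> (UNIV::'a set)" using lesspoll_trans1[OF image_lepoll] F by blast
  then obtain b where b: "g ` F \<subseteq> {..<b}" using small_imp_bounded by blast
  have "\<Union>F \<subseteq> W \<union> {..<b}"
  proof (rule Union_least)
    fix Y assume "Y \<in> F"
    hence "Y \<subseteq> W \<union> {..<g Y}" "g Y < b" using g b by auto
    thus "Y \<subseteq> W \<union> {..<b}" by (auto dest: order.strict_trans)
  qed
  thus "\<Union>F \<in> bounded_modulo W" by (rule bounded_moduloI)
next
  fix x :: 'a
  obtain b where "x < b" using ex_greater ..
  hence "{x} \<subseteq> W \<union> {..<b}" by simp
  thus "{x} \<in> bounded_modulo W" by (rule bounded_moduloI)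
qed

lemma generated_ideal_subset_bounded_modulo:
  "generated_ideal (small_ideal \<union> {W}) \<subseteq> bounded_modulo (W::'a set)"
  unfolding generated_ideal_def
proof (rule Inter_lower, intro CollectI conjI ideal_on_bounded_modulo subsetI)
  fix X assume "X \<in> small_ideal \<union> {W}"
  thus "X \<in> bounded_modulo W"
  proof
    assume "X \<in> small_ideal"
    then obtain b where "X \<subseteq> {..<b}" using small_imp_bounded unfolding small_ideal_def by auto
    hence "X \<subseteq> W \<union> {..<b}" by auto
    thus ?thesis by (rule bounded_moduloI)
  qed (auto intro: bounded_moduloI)
qed

lemma nonstationary_succ_preimage:
  fixes W :: "'a set"
  assumes limits: "\<And>l. l \<in> W \<Longrightarrow> limit_ord l"
    and "X \<in> pleasant_closure (generated_ideal (small_ideal \<union> {W}))"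
  shows "\<not> stationary (succ_ord -` X - W)"
  using assms(2)
proof induction
  case (base X)
  hence "X \<in> bounded_modulo W" using generated_ideal_subset_bounded_modulo by blast
  then obtain b where b: "X \<subseteq> W \<union> {..<b}" by (rule bounded_moduloE)
  have "l < b" if "succ_ord l \<in> X" for l
  proof -
    have "succ_ord l \<notin> W" using limits not_limit_succ by blast
    hence "succ_ord l < b" using b that by blast
    with less_succ show "l < b" by (rule order.strict_trans)
  qed
  thus ?case by (intro nonstationary_bounded[of _ b]) blast
next
  case (diag T X)
  hence "T \<in> bounded_modulo W" using generated_ideal_subset_bounded_modulo by blast
  then obtain b where b: "T \<subseteq> W \<union> {..<b}" by (rule bounded_moduloE)
  let ?D = "diag_union T (\<lambda>\<alpha>. succ_ord -` X \<alpha> - W)"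
  have "succ_ord -` diag_union T X - W \<subseteq> ?D \<union> {..<b}"
  proof
    fix l assume l: "l \<in> succ_ord -` diag_union T X - W"
    then obtain \<alpha> where \<alpha>: "\<alpha> < succ_ord l" "\<alpha> \<in> T" "succ_ord l \<in> X \<alpha>"
      unfolding diag_union_def by blast
    show "l \<in> ?D \<union> {..<b}"
    proof (cases "l < b")
      case False
      have "\<alpha> \<le> l" using \<alpha>(1) succ_ord_le[of l \<alpha>] by (meson leD not_le)
      moreover have "\<alpha> \<noteq> l" using \<alpha>(2) l b False by auto
      ultimately have "\<alpha> < l" by simp
      thus ?thesis using \<alpha> l unfolding diag_union_def by blast
    qed simp
  qed
  moreover have "\<not> stationary ?D" using diag.IH by (rule nonstationary_diag_union)
  ultimately show ?case using nonstationary_Un_bounded nonstationary_subset by blast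
next
  case (sub Y X)
  hence "succ_ord -` X - W \<subseteq> succ_ord -` Y - W" by blast
  with sub.IH show ?case by (rule nonstationary_subset)
next
  case (union F)
  have "(\<lambda>Y. succ_ord -` Y - W) ` F \<prec> (UNIV::'a set)"
    using lesspoll_trans1[OF image_lepoll union(1)] .
  hence "\<not> stationary (\<Union>((\<lambda>Y. succ_ord -` Y - W) ` F))"
    by (rule nonstationary_Union) (use union.IH in blast)
  moreover have "succ_ord -` \<Union>F - W = \<Union>((\<lambda>Y. succ_ord -` Y - W) ` F)" by blast
  ultimately show ?case by simp
next
  case (single x)
  have "succ_ord -` {x} - W \<subseteq> {..<x}" using less_succ by auto
  thus ?case by (rule nonstationary_bounded)
qed

end

theorem theorem3p13:
  fixes A :: "'a::wellorder set"
  assumes card: "is_cardinal_type TYPE('a)"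
    and reg: "is_regular_type TYPE('a)"
    and uncountable: "\<not> countable (UNIV::'a set)"
    and subA: "A \<subseteq> {succ_ord l | l. limit_ord l} - {succ_ord l | l. limit_ord l \<and> cf_omega l}"
    and stat: "stationary {l. succ_ord l \<in> A}"
  shows "A \<notin> pleasant_closure (generated_ideal (small_ideal \<union> {{l. limit_ord l \<and> cf_omega l}}))"
proof
  interpret regular_uncountable "TYPE('a)" using card reg uncountable by unfold_locales
  let ?W = "{l::'a. limit_ord l \<and> cf_omega l}"
  assume "A \<in> pleasant_closure (generated_ideal (small_ideal \<union> {?W}))"
  hence "\<not> stationary (succ_ord -` A - ?W)"
    by (rule nonstationary_succ_preimage[rotated]) simp
  moreover have "succ_ord -` A - ?W = {l. succ_ord l \<in> A}" using subA by blast
  ultimately show False using stat by argo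
qed

end
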